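(* Let $M$ be a Lagrangian submanifold of $N$ such that $A$ and $B$ take type II form with respect to a $\Delta_2$-orthonormal frame $\{E_1,E_2,E_3\}$ (with angle functions $\theta_1,\theta_2$). Then $h(E_1,E_1)=0$ (i.e. $h_{11}^1=h_{11}^2=h_{11}^3=0$), and $E_1(\theta_1)=0$, $E_2(\theta_1)=-h_{22}^2$, $E_3(\theta_1)=-h_{12}^3$, $E_1(\theta_2)=-h_{33}^2$, $E_2(\theta_2)=-h_{33}^1$, $E_3(\theta_2)=-h_{33}^3$. Furthermore $h_{33}^1=-2h_{22}^2$, $h_{33}^2=0$, $h_{33}^3=-2h_{12}^3$.
   Context: Let $\langle\alpha,\beta\rangle=\tfrac12\operatorname{tr}(\alpha\beta)$ on $\mathfrak{sl}(2,\mathbb R)$ (traceless real $2\times2$ matrices); tangent vectors of $\mathrm{SL}(2,\mathbb R)$ at $a$ are $a\alpha$, $\alpha\in\mathfrak{sl}(2,\mathbb R)$. On $N=\mathrm{SL}(2,\mathbb R)\times\mathrm{SL}(2,\mathbb R)$: $g((a\alpha,b\beta),(a\gamma,b\delta))=\tfrac23(\langle\alpha,\gamma\rangle+\langle\beta,\delta\rangle)-\tfrac13(\langle\beta,\gamma\rangle+\langle\alpha,\delta\rangle)$, $J(a\alpha,b\beta)=\tfrac1{\sqrt3}(a(\alpha-2\beta),b(2\alpha-\beta))$, $P(a\alpha,b\beta)=(a\beta,b\alpha)$; $\tilde\nabla$ is the Levi-Civita connection of $g$, $G(X,Y)=(\tilde\nabla_XJ)Y$. A Lagrangian submanifold $M$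 is 3-dimensional with nondegenerate induced metric and $J(TM)$ equal to the normal bundle; $P|_{TM}=A+JB$ with $A,B:TM\to TM$. The induced Levi-Civita connection $\nabla$ and second fundamental form $h$ are defined by $\tilde\nabla_XY=\nabla_XY+h(X,Y)$. A local frame $\{E_1,E_2,E_3\}$ on $M$ is $\Delta_2$-orthonormal if $g(E_1,E_1)=g(E_2,E_2)=0$, $g(E_1,E_2)=1$, $g(E_3,E_3)=1$, $g(E_1,E_3)=g(E_2,E_3)=0$; frames are normalized so that $JG(E_1,E_2)=\sqrt{2/3}\,E_3$. Write $h(E_i,E_j)=\sum_k h_{ij}^kJE_k$. $A,B$ take type II form with respect to the frame if, writing the matrix whose $j$-th column lists the coordinates of $AE_j$ (resp. $BE_j$), $A=\begin{pmatrix}\cos2\theta_1&1&0\\0&\cos2\theta_1&0\\0&0&\cos2\theta_2\end{pmatrix}$, $B=\begin{pmatrix}\sin2\theta_1&-\cot2\theta_1&0\\0&\sin2\theta_1&0\\0&0&\sin2\theta_2\end{pmatrix}$ for functions $\theta_1,\theta_2$ with $2\theta_1+\theta_2\equiv0 \pmod\pi$ and $\theta_1\not\equiv0,\pi/2\pmod\pi$. $E_i(\theta)$ denotes the derivative of $\theta$ along $E_i$. *)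

theory Defs
  imports "HOL-Analysis.Analysis"
begin

type_synonym m2 = "real^2^2"
type_synonym pt = "m2 \<times> m2"     (* element of sl(2,R) x sl(2,R) (left trivialization) *)
type_synonym crd = "real^3"       (* local coordinates on M *)

fun Ck :: "nat \<Rightarrow> ('a::real_normed_vector \<Rightarrow> 'b::real_normed_vector) \<Rightarrow> 'a set \<Rightarrow> bool" where
  "Ck 0 f U = continuous_on U f"
| "Ck (Suc n) f U = ((\<forall>x\<in>U. f differentiable (at x)) \<and> continuous_on U f \<and>
       (\<forall>v. Ck n (\<lambda>x. frechet_derivative f (at x) v) U))"

definition smooth_on :: "('a::real_normed_vector \<Rightarrow> 'b::real_normed_vector) \<Rightarrow> 'a set \<Rightarrow> bool" where
  "smooth_on f U = (\<forall>n. Ck n f U)"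

definition SL2 :: "m2 set" where "SL2 = {a. det a = 1}"
definition sl2 :: "m2 set" where "sl2 = {\<alpha>. trace \<alpha> = 0}"

definition ip :: "m2 \<Rightarrow> m2 \<Rightarrow> real" where "ip \<alpha> \<beta> = trace (\<alpha> ** \<beta>) / 2"

text \<open>The metric g, the almost complex structure J and the almost product structure P,
  all left-invariant, written on left-trivialized tangent vectors (a\<alpha>,b\<beta>) \<mapsto> (\<alpha>,\<beta>).\<close>
definition gN :: "pt \<Rightarrow> pt \<Rightarrow> real" where
  "gN x y = 2/3 * (ip (fst x) (fst y) + ip (snd x) (snd y)) - 1/3 * (ip (snd x) (fst y) + ip (fst x) (snd y))"

definition JN :: "pt \<Rightarrow> pt" where
  "JN x = ((1 / sqrt 3) *\<^sub>R (fst x - 2 *\<^sub>R snd x), (1 / sqrt 3) *\<^sub>R (2 *\<^sub>R fst x - snd x))"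

definition PN :: "pt \<Rightarrow> pt" where "PN x = (snd x, fst x)"

definition brk :: "pt \<Rightarrow> pt \<Rightarrow> pt" where
  "brk x y = (fst x ** fst y - fst y ** fst x, snd x ** snd y - snd y ** snd x)"

definition LC :: "pt \<Rightarrow> pt \<Rightarrow> pt" where
  "LC x y = (THE z. z \<in> sl2 \<times> sl2 \<and> (\<forall>w\<in>sl2 \<times> sl2.
      gN z w = (gN (brk x y) w - gN (brk y w) x + gN (brk w x) y) / 2))"

definition ltriv :: "(crd \<Rightarrow> pt) \<Rightarrow> crd \<Rightarrow> pt \<Rightarrow> pt" where
  "ltriv F u V = (matrix_inv (fst (F u)) ** fst V, matrix_inv (snd (F u)) ** snd V)"

definition tanF :: "(crd \<Rightarrow> pt) \<Rightarrow> crd \<Rightarrow> crd \<Rightarrow> pt" where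
  "tanF F u v = ltriv F u (frechet_derivative F (at u) v)"

text \<open>Levi-Civita covariant derivative along F, in direction of coordinate vector v at u,
  of a vector field Y along F (given in left-trivialized form).\<close>
definition covD :: "(crd \<Rightarrow> pt) \<Rightarrow> (crd \<Rightarrow> pt) \<Rightarrow> crd \<Rightarrow> crd \<Rightarrow> pt" where
  "covD F Y u v = frechet_derivative Y (at u) v + LC (tanF F u v) (Y u)"

definition GN :: "pt \<Rightarrow> pt \<Rightarrow> pt" where
  "GN x y = LC x (JN y) - JN (LC x y)"

end

(* Everything is left-invariant, so at a point the geometry is linear algebra on sl(2) x sl(2):
   solving the Koszul formula gives the Levi-Civita connection explicitly, and with it the identity
   (nabla_X P) Y = -1/2 J (G(X,PY) + P G(X,Y)).  The cubic form sigma(i,j,k) = g(h(E_i,E_j), J E_k)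
   is totally symmetric (Lagrangian condition, torsion-freeness, and G(E_i,E_j) being normal).
   Differentiating P E_1 = cos 2t1 E_1 + sin 2t1 J E_1 and P E_3 = cos 2t2 E_3 + sin 2t2 J E_3 along
   E_i and pairing with the frame expresses sigma(i,1,1), sigma(i,1,2) and sigma(i,3,3) through
   E_i(t1) and E_i(t2); since 2 t1 + t2 is locally constant, 2 E_i(t1) + E_i(t2) = 0, and symmetry of
   sigma yields all the stated relations. *)

theory Submission
  imports Defs
begin

section \<open>Left-invariant geometry of N on sl(2) \<times> sl(2)\<close>

definition ip_prod :: "pt \<Rightarrow> pt \<Rightarrow> real" where
  "ip_prod x y = ip (fst x) (fst y) + ip (snd x) (snd y)"

definition metric_op :: "pt \<Rightarrow> pt" where
  "metric_op x = ((2/3) *\<^sub>R fst x - (1/3) *\<^sub>R snd x, (2/3) *\<^sub>R snd x - (1/3) *\<^sub>R fst x)"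

definition metric_op_inv :: "pt \<Rightarrow> pt" where
  "metric_op_inv x = (2 *\<^sub>R fst x + snd x, 2 *\<^sub>R snd x + fst x)"

(* With g(x,y) = ip_prod x (metric_op y) and ip_prod ad-invariant, the Koszul formula is solved by
   nabla_x y = ([x,y] + Q^-1 ([x,Qy] - [Qx,y])) / 2, where Q = metric_op. *)
definition LC_left :: "pt \<Rightarrow> pt \<Rightarrow> pt" where
  "LC_left x y = (1/2) *\<^sub>R (brk x y + metric_op_inv (brk x (metric_op y) - brk (metric_op x) y))"

(* sqrt 3 times J: it keeps the coordinate identities free of square roots. *)
definition sqrt3_J :: "pt \<Rightarrow> pt" where
  "sqrt3_J x = (fst x - 2 *\<^sub>R snd x, 2 *\<^sub>R fst x - snd x)"

definition sqrt3_G :: "pt \<Rightarrow> pt \<Rightarrow> pt" where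
  "sqrt3_G x y = LC_left x (sqrt3_J y) - sqrt3_J (LC_left x y)"

lemma LC_left_explicit:
  "LC_left x y = (let m = (snd x ** fst y - fst y ** snd x) - (fst x ** snd y - snd y ** fst x) in
     ((1/2) *\<^sub>R (fst x ** fst y - fst y ** fst x) + (1/6) *\<^sub>R m,
      (1/2) *\<^sub>R (snd x ** snd y - snd y ** snd x) - (1/6) *\<^sub>R m))"
  by (simp add: LC_left_def metric_op_def metric_op_inv_def brk_def Let_def prod_eq_iff vec_eq_iff
    forall_2 matrix_matrix_mult_def sum_2 algebra_simps)

lemmas pt_coordinates = prod_eq_iff vec_eq_iff forall_2 matrix_matrix_mult_def sum_2 trace_def
  gN_def ip_def brk_def LC_left_explicit Let_def sqrt3_J_def sqrt3_G_def metric_op_def metric_op_inv_def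
  ip_prod_def PN_def

lemma gN_eq_ip_prod: "gN x y = ip_prod x (metric_op y)"
  by (simp add: pt_coordinates algebra_simps divide_simps)

lemma ip_prod_sym: "ip_prod x y = ip_prod y x"
  by (simp add: pt_coordinates algebra_simps divide_simps)

lemma ip_prod_brk: "ip_prod (brk a b) c = ip_prod a (brk b c)"
  by (simp add: pt_coordinates algebra_simps divide_simps)

lemma ip_prod_metric_op: "ip_prod (metric_op a) b = ip_prod a (metric_op b)"
  by (simp add: pt_coordinates algebra_simps divide_simps)

lemma metric_op_inverse: "metric_op (metric_op_inv x) = x"
  by (simp add: pt_coordinates algebra_simps)

lemma ip_prod_add: "ip_prod (a + b) c = ip_prod a c + ip_prod b c"
  and ip_prod_diff: "ip_prod (a - b) c = ip_prod a c - ip_prod b c"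
  and ip_prod_scaleR: "ip_prod (r *\<^sub>R a) c = r * ip_prod a c"
  by (simp_all add: pt_coordinates algebra_simps divide_simps)

lemma gN_add: "gN (a + b) c = gN a c + gN b c"
  and gN_diff: "gN (a - b) c = gN a c - gN b c"
  and gN_scaleR: "gN (r *\<^sub>R a) c = r * gN a c"
  by (simp_all add: gN_eq_ip_prod ip_prod_add ip_prod_diff ip_prod_scaleR)

lemma LC_left_koszul:
  "gN (LC_left x y) w = (gN (brk x y) w - gN (brk y w) x + gN (brk w x) y) / 2"
proof -
  have inv: "ip_prod (metric_op_inv z) (metric_op w) = ip_prod z w" for z
    by (metis ip_prod_metric_op metric_op_inverse ip_prod_sym)
  have "gN (brk y w) x = ip_prod (brk (metric_op x) y) w"
    and "gN (brk w x) y = ip_prod (brk x (metric_op y)) w"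
    by (metis gN_eq_ip_prod ip_prod_sym ip_prod_brk)+
  then show ?thesis
    by (simp add: gN_eq_ip_prod LC_left_def ip_prod_scaleR ip_prod_add ip_prod_diff inv)
qed

lemma trace_scaleR: "trace (r *\<^sub>R a) = r * trace (a::m2)"
  by (simp add: trace_def sum_2 algebra_simps)

lemma trace_commutator: "trace (a ** b - b ** (a::m2)) = 0"
  by (simp add: pt_coordinates)

lemma brk_sl2: "brk x y \<in> sl2 \<times> sl2"
  by (simp add: brk_def sl2_def trace_commutator)

lemma metric_op_inv_sl2: "x \<in> sl2 \<times> sl2 \<Longrightarrow> metric_op_inv x \<in> sl2 \<times> sl2"
  by (auto simp add: sl2_def metric_op_inv_def trace_add trace_scaleR)

lemma sl2_prod_diff: "x \<in> sl2 \<times> sl2 \<Longrightarrow> y \<in> sl2 \<times> sl2 \<Longrightarrow> x - y \<in> sl2 \<times> sl2"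
  and sl2_prod_add: "x \<in> sl2 \<times> sl2 \<Longrightarrow> y \<in> sl2 \<times> sl2 \<Longrightarrow> x + y \<in> sl2 \<times> sl2"
  and sl2_prod_scaleR: "x \<in> sl2 \<times> sl2 \<Longrightarrow> r *\<^sub>R x \<in> sl2 \<times> sl2"
  by (auto simp: sl2_def trace_sub trace_add trace_scaleR)

lemma JN_sl2: "x \<in> sl2 \<times> sl2 \<Longrightarrow> JN x \<in> sl2 \<times> sl2"
  by (cases x) (simp add: JN_def sl2_def trace_sub trace_scaleR)

lemma LC_left_sl2: "LC_left x y \<in> sl2 \<times> sl2"
  unfolding LC_left_def
  by (intro sl2_prod_scaleR sl2_prod_add metric_op_inv_sl2 sl2_prod_diff brk_sl2)

lemma gN_nondegenerate_sl2:
  assumes d: "d \<in> sl2 \<times> sl2" and orth: "\<forall>w\<in>sl2 \<times> sl2. gN d w = 0"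
  shows "d = 0"
proof -
  have ip: "ip_prod d e = 0" if "e \<in> sl2 \<times> sl2" for e
    using orth[rule_format, OF metric_op_inv_sl2[OF that]] by (simp add: gN_eq_ip_prod metric_op_inverse)
  define e11 e12 e21 :: m2 where "e11 = (\<chi> i j. if i = j then (if i = 1 then 1 else -1) else 0)"
    and "e12 = (\<chi> i j. if i = 1 \<and> j = 2 then 1 else 0)" and "e21 = (\<chi> i j. if i = 2 \<and> j = 1 then 1 else 0)"
  have "e11 \<in> sl2" "e12 \<in> sl2" "e21 \<in> sl2" "0 \<in> sl2"
    by (simp_all add: sl2_def trace_def sum_2 e11_def e12_def e21_def)
  then have "ip_prod d (e11, 0) = 0" "ip_prod d (e12, 0) = 0" "ip_prod d (e21, 0) = 0"
    "ip_prod d (0, e11) = 0" "ip_prod d (0, e12) = 0" "ip_prod d (0, e21) = 0"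
    by (simp_all add: ip)
  moreover have "fst d $ 1 $ 1 + fst d $ 2 $ 2 = 0" "snd d $ 1 $ 1 + snd d $ 2 $ 2 = 0"
    using d by (auto simp: sl2_def trace_def sum_2)
  ultimately show ?thesis
    by (simp add: pt_coordinates e11_def e12_def e21_def)
qed

lemma LC_eq_LC_left: "LC x y = LC_left x y"
  unfolding LC_def
proof (rule the_equality)
  show "LC_left x y \<in> sl2 \<times> sl2 \<and> (\<forall>w\<in>sl2 \<times> sl2.
      gN (LC_left x y) w = (gN (brk x y) w - gN (brk y w) x + gN (brk w x) y) / 2)"
    using LC_left_sl2 LC_left_koszul by blast
next
  fix z assume z: "z \<in> sl2 \<times> sl2 \<and> (\<forall>w\<in>sl2 \<times> sl2.
      gN z w = (gN (brk x y) w - gN (brk y w) x + gN (brk w x) y) / 2)"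
  have "\<forall>w\<in>sl2 \<times> sl2. gN (z - LC_left x y) w = 0"
    using z by (simp only: gN_diff LC_left_koszul) simp
  with z LC_left_sl2 have "z - LC_left x y = 0"
    by (intro gN_nondegenerate_sl2 sl2_prod_diff) auto
  then show "z = LC_left x y" by simp
qed

lemma sqrt3_G_antisym: "sqrt3_G x y = - sqrt3_G y x"
  by (simp add: pt_coordinates algebra_simps)

lemma LC_left_PN:
  "LC_left x (PN y) - PN (LC_left x y) = (1/6) *\<^sub>R sqrt3_J (sqrt3_G x (PN y) + PN (sqrt3_G x y))"
  by (simp add: pt_coordinates algebra_simps)

lemma LC_left_torsion_free: "LC_left x y - LC_left y x = brk x y"
  by (simp add: pt_coordinates algebra_simps)

lemma sqrt3_J_sqrt3_J: "sqrt3_J (sqrt3_J a) = (-3) *\<^sub>R a"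
  by (simp add: pt_coordinates algebra_simps)

lemma sqrt3_J_scaleR: "sqrt3_J (r *\<^sub>R a) = r *\<^sub>R sqrt3_J a"
  by (simp add: sqrt3_J_def algebra_simps)

lemma JN_eq_sqrt3_J: "JN x = (1 / sqrt 3) *\<^sub>R sqrt3_J x"
  by (simp add: JN_def sqrt3_J_def)

lemma gN_sym: "gN x y = gN y x"
  by (metis gN_eq_ip_prod ip_prod_metric_op ip_prod_sym)

lemma gN_add_right: "gN c (a + b) = gN c a + gN c b"
  and gN_diff_right: "gN c (a - b) = gN c a - gN c b"
  and gN_scaleR_right: "gN c (r *\<^sub>R a) = r * gN c a"
  by (simp_all add: gN_sym[of c] gN_add gN_diff gN_scaleR)

lemma JN_add: "JN (a + b) = JN a + JN b"
  and JN_diff: "JN (a - b) = JN a - JN b"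
  and JN_scaleR: "JN (r *\<^sub>R a) = r *\<^sub>R JN a"
  by (simp_all add: JN_def algebra_simps)

lemma LC_add_right: "LC c (a + b) = LC c a + LC c b"
  and LC_diff_right: "LC c (a - b) = LC c a - LC c b"
  and LC_scaleR_right: "LC c (r *\<^sub>R a) = r *\<^sub>R LC c a"
  by (simp_all add: LC_eq_LC_left pt_coordinates algebra_simps)

lemma JN_JN: "JN (JN a) = - a"
proof -
  have "(1 / sqrt 3) * (1 / sqrt 3) = (1/3 :: real)"
    by (simp add: field_simps)
  then show ?thesis
    by (simp add: JN_eq_sqrt3_J sqrt3_J_sqrt3_J sqrt3_J_scaleR)
qed

lemma PN_JN: "PN (JN a) = - JN (PN a)"
  by (simp add: PN_def JN_def algebra_simps)

lemma gN_JN_left: "gN (JN x) y = - gN x (JN y)"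
  by (simp add: JN_def pt_coordinates algebra_simps divide_simps)

lemma gN_JN_JN: "gN (JN x) (JN y) = gN x y"
  by (simp add: gN_JN_left JN_JN gN_sym[of x] gN_sym[of "- y"] gN_scaleR[of "-1", simplified])

lemma gN_PN_left: "gN (PN x) y = gN x (PN y)"
  by (simp add: pt_coordinates algebra_simps divide_simps)

lemma LC_torsion_free: "LC x y - LC y x = brk x y"
  by (simp add: LC_eq_LC_left LC_left_torsion_free)

lemma LC_metric: "gN (LC x y) z = - gN y (LC x z)"
proof -
  have "brk z y = - brk y z" "brk x z = - brk z x" "brk y x = - brk x y"
    by (simp_all add: brk_def)
  then have "2 * (gN (LC x y) z + gN (LC x z) y) = 0"
    using LC_left_koszul[of x y z] LC_left_koszul[of x z y]
    by (simp add: LC_eq_LC_left gN_scaleR[of "-1", simplified])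
  then show ?thesis by (simp add: gN_sym[of y])
qed

lemma GN_eq_sqrt3_G: "GN x y = (1 / sqrt 3) *\<^sub>R sqrt3_G x y"
  by (simp add: GN_def sqrt3_G_def JN_eq_sqrt3_J LC_scaleR_right[unfolded LC_eq_LC_left]
      LC_eq_LC_left sqrt3_J_scaleR algebra_simps)

lemma GN_antisym: "GN x y = - GN y x"
  by (simp add: GN_eq_sqrt3_G sqrt3_G_antisym[of x y])

lemma GN_JN_right: "GN x (JN y) = - JN (GN x y)"
  by (simp add: GN_def JN_JN LC_scaleR_right[of _ "-1", simplified] JN_diff)

lemma GN_metric_skew: "gN (GN x y) z = - gN (GN x z) y"
proof -
  have "gN (GN x y) z = - gN (JN y) (LC x z) + gN (LC x y) (JN z)" for y z
    by (simp add: GN_def gN_diff LC_metric gN_JN_left)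
  then show ?thesis
    by (simp add: gN_sym[of "JN y"] gN_sym[of "JN z"])
qed

lemma LC_PN:
  "PN (LC x y) = LC x (PN y) - (1/2) *\<^sub>R JN (GN x (PN y) + PN (GN x y))"
proof -
  have "GN x (PN y) + PN (GN x y) = (1 / sqrt 3) *\<^sub>R (sqrt3_G x (PN y) + PN (sqrt3_G x y))"
    by (simp add: GN_eq_sqrt3_G PN_def scaleR_add_right)
  moreover have "(1/2) * ((1 / sqrt 3) * (1 / sqrt 3)) = (1/6 :: real)"
    by (simp add: field_simps)
  ultimately have "(1/2) *\<^sub>R JN (GN x (PN y) + PN (GN x y))
      = (1/6) *\<^sub>R sqrt3_J (sqrt3_G x (PN y) + PN (sqrt3_G x y))"
    by (simp only: JN_eq_sqrt3_J sqrt3_J_scaleR scaleR_scaleR)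
  then show ?thesis
    using LC_left_PN[of x y] by (simp add: LC_eq_LC_left algebra_simps)
qed

lemma gN_minus: "gN (- a) c = - gN a c"
  and gN_minus_right: "gN c (- a) = - gN c a"
  and gN_zero: "gN 0 c = 0"
  and gN_zero_right: "gN c 0 = 0"
  using gN_scaleR[of "-1" a c] gN_scaleR_right[of c "-1" a] gN_scaleR[of 0 0 c] gN_scaleR_right[of c 0 0]
  by simp_all

lemma JN_minus: "JN (- a) = - JN a"
  and JN_zero: "JN 0 = 0"
  using JN_scaleR[of "-1" a] JN_scaleR[of 0 0] by simp_all

lemma PN_add: "PN (a + b) = PN a + PN b"
  and PN_diff: "PN (a - b) = PN a - PN b"
  and PN_scaleR: "PN (r *\<^sub>R a) = r *\<^sub>R PN a"
  and PN_minus: "PN (- a) = - PN a"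
  by (simp_all add: PN_def)

lemma LC_minus_right: "LC c (- a) = - LC c a"
  using LC_scaleR_right[of c "-1" a] by simp

lemma LC_JN_right: "LC x (JN y) = JN (LC x y) + GN x y"
  by (simp add: GN_def)

lemma GN_add_right: "GN c (a + b) = GN c a + GN c b"
  and GN_diff_right: "GN c (a - b) = GN c a - GN c b"
  and GN_scaleR_right: "GN c (r *\<^sub>R a) = r *\<^sub>R GN c a"
  and GN_minus_right: "GN c (- a) = - GN c a"
  by (simp_all add: GN_def JN_add JN_diff JN_minus JN_scaleR LC_add_right LC_diff_right
      LC_scaleR_right LC_minus_right algebra_simps)

lemmas pt_linearity = gN_add gN_add_right gN_diff gN_diff_right gN_scaleR gN_scaleR_right
  gN_minus gN_minus_right gN_zero gN_zero_right JN_add JN_diff JN_scaleR JN_minus JN_JN JN_zero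
  PN_add PN_diff PN_scaleR PN_minus PN_JN LC_add_right LC_diff_right LC_scaleR_right LC_minus_right
  GN_add_right GN_diff_right GN_scaleR_right GN_minus_right GN_JN_right LC_JN_right
  gN_JN_left gN_PN_left

lemma bounded_linear_JN: "bounded_linear JN"
  using linear_conv_bounded_linear by (metis linearI JN_add JN_scaleR)

lemma bounded_linear_PN: "bounded_linear PN"
  using linear_conv_bounded_linear by (metis linearI PN_add PN_scaleR)

lemma bounded_bilinear_gN: "bounded_bilinear gN"
proof -
  have "linear (gN x)" "linear (\<lambda>y. gN y x)" for x
    by (rule linearI; simp add: gN_add gN_scaleR gN_add_right gN_scaleR_right)+
  then have "bilinear gN"
    by (simp add: bilinear_def)
  then show ?thesis using bilinear_conv_bounded_bilinear by blast
qed

lemma GN_self: "GN x x = 0"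
  by (simp add: GN_eq_sqrt3_G pt_coordinates algebra_simps)

lemma gN_GN_self: "gN (GN x y) y = 0"
  using GN_metric_skew[of x y y] by simp

lemma gN_GN_self_left: "gN (GN x y) x = 0"
  using gN_GN_self[of y x] GN_antisym[of x y] by (simp add: gN_minus)

lemma gN_GN_JN_self: "gN (GN x y) (JN y) = 0"
proof -
  have "gN (GN x y) (JN y) = gN (JN (GN x y)) y"
    using GN_metric_skew[of x y "JN y"] by (simp add: GN_JN_right gN_minus)
  also have "\<dots> = - gN (GN x y) (JN y)" by (rule gN_JN_left)
  finally show ?thesis by simp
qed

lemma gN_LC_self: "gN (LC x y) y = 0"
  using LC_metric[of x y y] gN_sym[of y "LC x y"] by simp

lemma LC_swap_normal: "gN (LC x y) (JN z) - gN (LC x z) (JN y) = gN (GN x y) z"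
proof -
  have "gN (LC x z) (JN y) = - gN z (LC x (JN y))" by (rule LC_metric)
  also have "\<dots> = gN (LC x y) (JN z) - gN z (GN x y)"
    by (simp add: LC_JN_right gN_add_right gN_JN_left gN_sym[of z])
  finally show ?thesis by (simp add: gN_sym[of z])
qed

lemma eq_0_if_mult_eq_0_circle:
  fixes x :: real
  assumes "C\<^sup>2 + S\<^sup>2 = 1" "C * x = 0" "S * x = 0"
  shows "x = 0"
proof -
  have "x = (C\<^sup>2 + S\<^sup>2) * x" using assms(1) by simp
  also have "\<dots> = C * (C * x) + S * (S * x)" by (simp add: power2_eq_square algebra_simps)
  finally show ?thesis using assms(2,3) by simp
qed

lemma LC_normal_of_P_eigen:
  assumes P: "PN y = C *\<^sub>R y + S *\<^sub>R JN y" and CS: "C\<^sup>2 + S\<^sup>2 = 1"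
  shows "gN (LC x y) (JN y) = 0"
proof -
  let ?q = "gN (LC x y) (JN y)"
  have "gN (PN (LC x y)) y = gN (LC x (PN y) - (1/2) *\<^sub>R JN (GN x (PN y) + PN (GN x y))) y"
    and "gN (PN (LC x y)) (JN y) = gN (LC x (PN y) - (1/2) *\<^sub>R JN (GN x (PN y) + PN (GN x y))) (JN y)"
    by (simp_all only: LC_PN)
  then have "S * ?q = - S * ?q" "C * ?q = - C * ?q"
    by (simp_all add: P gN_GN_self gN_GN_JN_self gN_LC_self pt_linearity algebra_simps)
  then have "C * ?q = 0" "S * ?q = 0"
    by simp_all
  with CS show ?thesis
    by (rule eq_0_if_mult_eq_0_circle)
qed

lemma LC_normal_of_P_jordan:
  assumes P1: "PN y1 = C *\<^sub>R y1 + S *\<^sub>R JN y1"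
    and P2: "PN y2 = y1 + C *\<^sub>R y2 + JN (T *\<^sub>R y1 + S *\<^sub>R y2)"
    and S: "S \<noteq> 0" and q1: "gN (LC x y1) (JN y1) = 0" and G: "gN (GN x y1) y2 = 0"
  shows "gN (LC x y1) (JN y2) = 0"
proof -
  have "gN (PN (LC x y1)) y2 = gN (LC x (PN y1) - (1/2) *\<^sub>R JN (GN x (PN y1) + PN (GN x y1))) y2"
    by (simp only: LC_PN)
  then have "S * gN (LC x y1) (JN y2) = - S * gN (LC x y1) (JN y2)"
    by (simp add: P1 P2 q1 G gN_GN_self gN_GN_JN_self gN_LC_self pt_linearity algebra_simps)
  with S show ?thesis by simp
qed

section \<open>Type II frames at a point\<close>

lemma sum_123: "(\<Sum>k\<in>{1,2,3::nat}. f k) = f 1 + f 2 + f 3"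
  by (simp add: add.assoc)

(* The data at one point u: X j = E_j, D i j = derivative of the field E_j along E_i in the left
   trivialization (so D i j + LC (X i) (X j) is the covariant derivative), t1 = theta1 u,
   t2 = theta2 u, a i = E_i(theta1) and b i = E_i(theta2). *)
locale typeII_point =
  fixes X :: "nat \<Rightarrow> pt" and D :: "nat \<Rightarrow> nat \<Rightarrow> pt"
    and c h :: "nat \<Rightarrow> nat \<Rightarrow> nat \<Rightarrow> real"
    and t1 t2 :: real and a b :: "nat \<Rightarrow> real"
  assumes lagrangian: "gN (JN (X j)) (X k) = 0"
    and frame: "gN (X 1) (X 1) = 0" "gN (X 2) (X 2) = 0" "gN (X 1) (X 2) = 1"
      "gN (X 3) (X 3) = 1" "gN (X 1) (X 3) = 0" "gN (X 2) (X 3) = 0"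
    and normalized: "JN (GN (X 1) (X 2)) = sqrt (2/3) *\<^sub>R X 3"
    and P_X1: "PN (X 1) = cos (2 * t1) *\<^sub>R X 1 + sin (2 * t1) *\<^sub>R JN (X 1)"
    and P_X2: "PN (X 2) = X 1 + cos (2 * t1) *\<^sub>R X 2
                 + JN ((- cot (2 * t1)) *\<^sub>R X 1 + sin (2 * t1) *\<^sub>R X 2)"
    and P_X3: "PN (X 3) = cos (2 * t2) *\<^sub>R X 3 + sin (2 * t2) *\<^sub>R JN (X 3)"
    and sin_t1: "sin (2 * t1) \<noteq> 0"
    and gauss: "\<And>i j. i \<in> {1,2,3} \<Longrightarrow> j \<in> {1,2,3} \<Longrightarrow> D i j + LC (X i) (X j) =
      (\<Sum>k\<in>{1,2,3}. c i j k *\<^sub>R X k) + (\<Sum>k\<in>{1,2,3}. h i j k *\<^sub>R JN (X k))"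
    and P_D1: "PN (D i 1) = cos (2 * t1) *\<^sub>R D i 1 + sin (2 * t1) *\<^sub>R JN (D i 1)
      + (- 2 * sin (2 * t1) * a i) *\<^sub>R X 1 + (2 * cos (2 * t1) * a i) *\<^sub>R JN (X 1)"
    and P_D3: "PN (D i 3) = cos (2 * t2) *\<^sub>R D i 3 + sin (2 * t2) *\<^sub>R JN (D i 3)
      + (- 2 * sin (2 * t2) * b i) *\<^sub>R X 3 + (2 * cos (2 * t2) * b i) *\<^sub>R JN (X 3)"
    and null_D1: "gN (D i 1) (X 1) = 0"
    and lagrangian_D: "\<And>j k. j \<in> {1,2,3} \<Longrightarrow> k \<in> {1,2,3} \<Longrightarrow>
      gN (JN (D i j)) (X k) + gN (JN (X j)) (D i k) = 0"
    and torsion_D: "\<And>i j. i \<in> {1,2,3} \<Longrightarrow> j \<in> {1,2,3} \<Longrightarrow>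
      gN (D i j - D j i + brk (X i) (X j)) (JN (X k)) = 0"
    and angle_sum_D: "2 * a i + b i = 0"
begin

(* sff i j k = g(h(E_i,E_j), J E_k); because g(E_1,E_2) = 1, the indices 1 and 2 are swapped with
   respect to the components h_ij^k (see sff_eq_h). *)
definition sff :: "nat \<Rightarrow> nat \<Rightarrow> nat \<Rightarrow> real" where
  "sff i j k = gN (D i j + LC (X i) (X j)) (JN (X k))"

lemma lagrangian_right: "gN (X j) (JN (X k)) = 0"
  using lagrangian[of k j] by (simp add: gN_sym)

lemma frame_sym: "gN (X 2) (X 1) = 1" "gN (X 3) (X 1) = 0" "gN (X 3) (X 2) = 0"
  using frame by (simp_all add: gN_sym)

lemma sff_eq_h:
  assumes "i \<in> {1,2,3}" "j \<in> {1,2,3}"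
  shows "sff i j 1 = h i j 2" "sff i j 2 = h i j 1" "sff i j 3 = h i j 3"
  unfolding sff_def gauss[OF assms] sum_123
  using frame frame_sym by (simp_all add: pt_linearity lagrangian_right)

lemma GN_frame_normal:
  assumes "i \<in> {1,2,3}" "j \<in> {1,2,3}" "k \<in> {1,2,3}"
  shows "gN (GN (X i) (X j)) (X k) = 0"
proof -
  have 123: "gN (GN (X 1) (X 2)) (X 3) = 0"
  proof -
    have "gN (GN (X 1) (X 2)) (X 3) = gN (JN (GN (X 1) (X 2))) (JN (X 3))"
      by (rule gN_JN_JN[symmetric])
    also have "\<dots> = 0"
      by (simp only: normalized gN_scaleR lagrangian_right mult_zero_right)
    finally show ?thesis .
  qed
  have "gN (GN (X 1) (X 3)) (X 2) = 0" "gN (GN (X 2) (X 1)) (X 3) = 0"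
    "gN (GN (X 2) (X 3)) (X 1) = 0" "gN (GN (X 3) (X 1)) (X 2) = 0"
    "gN (GN (X 3) (X 2)) (X 1) = 0"
    using 123 GN_metric_skew GN_antisym by (metis gN_minus neg_equal_0_iff_equal)+
  with 123 assms show ?thesis
    by (auto simp: GN_self gN_GN_self gN_GN_self_left gN_zero)
qed

lemma sff_sym_right:
  assumes "i \<in> {1,2,3}" "j \<in> {1,2,3}" "k \<in> {1,2,3}"
  shows "sff i j k = sff i k j"
proof -
  have "gN (D i j) (JN (X k)) = gN (D i k) (JN (X j))"
    using lagrangian_D[OF assms(2,3), of i] by (simp add: gN_JN_left gN_sym[of "X j"])
  moreover have "gN (LC (X i) (X j)) (JN (X k)) = gN (LC (X i) (X k)) (JN (X j))"
    using LC_swap_normal[of "X i" "X j" "X k"] GN_frame_normal[OF assms] by simp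
  ultimately show ?thesis
    by (simp add: sff_def gN_add)
qed

lemma sff_sym_left:
  assumes "i \<in> {1,2,3}" "j \<in> {1,2,3}"
  shows "sff i j k = sff j i k"
proof -
  have "sff i j k - sff j i k = gN (D i j - D j i + (LC (X i) (X j) - LC (X j) (X i))) (JN (X k))"
    by (simp add: sff_def gN_add gN_diff)
  also have "\<dots> = 0"
    using torsion_D[OF assms] by (simp add: LC_torsion_free)
  finally show ?thesis by simp
qed

lemma D1_normal_X1: "gN (D i 1) (JN (X 1)) = 0"
proof -
  have "gN (PN (D i 1)) (X 1) = gN (cos (2 * t1) *\<^sub>R D i 1 + sin (2 * t1) *\<^sub>R JN (D i 1)
      + (- 2 * sin (2 * t1) * a i) *\<^sub>R X 1 + (2 * cos (2 * t1) * a i) *\<^sub>R JN (X 1)) (X 1)"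
    by (simp only: P_D1)
  then have "sin (2 * t1) * gN (D i 1) (JN (X 1)) = - sin (2 * t1) * gN (D i 1) (JN (X 1))"
    using frame P_X1 null_D1[of i] by (simp add: pt_linearity lagrangian_right algebra_simps One_nat_def)
  with sin_t1 show ?thesis by simp
qed

lemma sff_111: "sff i 1 1 = 0"
  using D1_normal_X1 LC_normal_of_P_eigen[OF P_X1]
  by (simp add: sff_def gN_add)

lemma sff_112:
  assumes "i \<in> {1,2,3}"
  shows "sff i 1 2 = - a i"
proof -
  have "gN (PN (D i 1)) (X 2) = gN (cos (2 * t1) *\<^sub>R D i 1 + sin (2 * t1) *\<^sub>R JN (D i 1)
      + (- 2 * sin (2 * t1) * a i) *\<^sub>R X 1 + (2 * cos (2 * t1) * a i) *\<^sub>R JN (X 1)) (X 2)"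
    by (simp only: P_D1)
  then have "sin (2 * t1) * (2 * (gN (D i 1) (JN (X 2)) + a i)) = 0"
    using frame frame_sym D1_normal_X1 null_D1
    by (simp add: pt_linearity P_X2 lagrangian_right algebra_simps One_nat_def)
  with sin_t1 have "gN (D i 1) (JN (X 2)) = - a i"
    by (simp add: add_eq_0_iff)
  moreover have "gN (LC (X i) (X 1)) (JN (X 2)) = 0"
    using LC_normal_of_P_jordan[OF P_X1 P_X2 sin_t1 LC_normal_of_P_eigen[OF P_X1]]
      GN_frame_normal[OF assms, of 1 2] by simp
  ultimately show ?thesis
    by (simp add: sff_def gN_add)
qed

lemma sff_333: "sff i 3 3 = - b i"
proof -
  let ?q = "gN (D i 3) (JN (X 3))"
  let ?PD = "cos (2 * t2) *\<^sub>R D i 3 + sin (2 * t2) *\<^sub>R JN (D i 3)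
      + (- 2 * sin (2 * t2) * b i) *\<^sub>R X 3 + (2 * cos (2 * t2) * b i) *\<^sub>R JN (X 3)"
  have "gN (PN (D i 3)) (X 3) = gN ?PD (X 3)"
    by (simp only: P_D3)
  then have "sin (2 * t2) * ?q = - sin (2 * t2) * ?q - 2 * sin (2 * t2) * b i"
    using frame P_X3 by (simp add: pt_linearity lagrangian_right algebra_simps)
  moreover have "gN (PN (D i 3)) (JN (X 3)) = gN ?PD (JN (X 3))"
    by (simp only: P_D3)
  then have "- cos (2 * t2) * ?q = cos (2 * t2) * ?q + 2 * cos (2 * t2) * b i"
    using frame P_X3 by (simp add: pt_linearity lagrangian_right algebra_simps)
  ultimately have "cos (2 * t2) * (?q + b i) = 0" "sin (2 * t2) * (?q + b i) = 0"
    by (simp_all add: algebra_simps)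
  then have "?q + b i = 0"
    by (rule eq_0_if_mult_eq_0_circle[OF sin_cos_squared_add2])
  then show ?thesis
    using LC_normal_of_P_eigen[OF P_X3 sin_cos_squared_add2] by (simp add: sff_def gN_add eq_neg_iff_add_eq_0)
qed

lemma typeII_relations:
  "h 1 1 1 = 0 \<and> h 1 1 2 = 0 \<and> h 1 1 3 = 0 \<and> a 1 = 0 \<and> a 2 = - h 2 2 2 \<and>
   a 3 = - h 1 2 3 \<and> b 1 = - h 3 3 2 \<and> b 2 = - h 3 3 1 \<and> b 3 = - h 3 3 3 \<and>
   h 3 3 1 = - 2 * h 2 2 2 \<and> h 3 3 2 = 0 \<and> h 3 3 3 = - 2 * h 1 2 3"
proof -
  have I: "1 \<in> {1,2,3::nat}" "2 \<in> {1,2,3::nat}" "3 \<in> {1,2,3::nat}" by auto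
  note h11 = sff_eq_h[OF I(1) I(1)] and h12 = sff_eq_h[OF I(1) I(2)]
    and h22 = sff_eq_h[OF I(2) I(2)] and h33 = sff_eq_h[OF I(3) I(3)]
  have a1: "a 1 = 0"
    using sff_111[of 2] sff_sym_left[OF I(2) I(1), of 1] sff_sym_right[OF I(1) I(2) I(1)]
      sff_112[OF I(1)] by simp
  have a2: "a 2 = - h 2 2 2"
    using h22 sff_112[OF I(2)] sff_sym_right[OF I(2) I(1) I(2)] by simp
  have a3: "a 3 = - h 1 2 3"
    using h12 sff_112[OF I(3)] sff_sym_left[OF I(3) I(1), of 2] sff_sym_right[OF I(1) I(3) I(2)]
    by simp
  have b1: "b 1 = - h 3 3 2"
    using h33 sff_333[of 1] sff_sym_left[OF I(1) I(3), of 3] sff_sym_right[OF I(3) I(1) I(3)]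
    by simp
  have b2: "b 2 = - h 3 3 1"
    using h33 sff_333[of 2] sff_sym_left[OF I(2) I(3), of 3] sff_sym_right[OF I(3) I(2) I(3)]
    by simp
  have b3: "b 3 = - h 3 3 3"
    using h33 sff_333[of 3] by simp
  have "h 1 1 3 = 0"
    using h11 sff_sym_right[OF I(1) I(1) I(3)] sff_sym_left[OF I(1) I(3), of 1] sff_111[of 3]
    by simp
  moreover have "h 1 1 1 = 0" "h 1 1 2 = 0"
    using h11 sff_112[OF I(1)] sff_111[of 1] a1 by simp_all
  moreover have "h 3 3 1 = - 2 * h 2 2 2" "h 3 3 2 = 0" "h 3 3 3 = - 2 * h 1 2 3"
    using angle_sum_D[of 1] angle_sum_D[of 2] angle_sum_D[of 3] a1 a2 a3 b1 b2 b3 by simp_all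
  ultimately show ?thesis
    using a1 a2 a3 b1 b2 b3 by simp
qed

end

section \<open>Calculus on the coordinate patch\<close>

lemma has_derivative_along_line:
  fixes g :: "'a::real_normed_vector \<Rightarrow> real"
  assumes "(g has_derivative g') (at (p + s *\<^sub>R v))"
  shows "((\<lambda>s. g (p + s *\<^sub>R v)) has_derivative (\<lambda>h. h * g' v)) (at s within S)"
proof -
  have 1: "((\<lambda>s. p + s *\<^sub>R v) has_derivative (\<lambda>h. h *\<^sub>R v)) (at s within S)"
    by (auto intro!: derivative_eq_intros)
  have l: "linear g'" using assms has_derivative_linear by blast
  show ?thesis using has_derivative_compose[OF 1 assms] by (simp add: linear_cmul[OF l])
qed

lemma second_difference_mean_value:
  fixes g :: "'a::real_normed_vector \<Rightarrow> real"
  assumes t: "0 < t" and reg: "\<And>s \<tau>. s \<in> {0..t} \<Longrightarrow> \<tau> \<in> {0..t} \<Longrightarrow> u + s *\<^sub>R v + \<tau> *\<^sub>R w \<in> U"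
    and dg: "\<And>x. x \<in> U \<Longrightarrow> (g has_derivative g' x) (at x)"
    and dg1: "\<And>x. x \<in> U \<Longrightarrow> ((\<lambda>y. g' y v) has_derivative h2 x) (at x)"
  shows "\<exists>s\<in>{0..t}. \<exists>\<tau>\<in>{0..t}. g (u + t *\<^sub>R v + t *\<^sub>R w) - g (u + t *\<^sub>R v) - g (u + t *\<^sub>R w) + g u
          = t * t * h2 (u + s *\<^sub>R v + \<tau> *\<^sub>R w) w"
proof -
  define \<psi> where "\<psi> s = g ((u + t *\<^sub>R w) + s *\<^sub>R v) - g (u + s *\<^sub>R v)" for s
  have in1: "(u + t *\<^sub>R w) + s *\<^sub>R v \<in> U" if "s \<in> {0..t}" for s
    using reg[OF that, of t] t by (simp add: algebra_simps)
  have in2: "u + s *\<^sub>R v \<in> U" if "s \<in> {0..t}" for s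
    using reg[OF that, of 0] t by simp
  have "\<exists>\<sigma>\<in>{0..t}. \<psi> t - \<psi> 0 = (\<lambda>h. h * (g' ((u + t *\<^sub>R w) + \<sigma> *\<^sub>R v) v - g' (u + \<sigma> *\<^sub>R v) v)) (t - 0)"
  proof (rule mvt_very_simple)
    show "0 \<le> t" using t by simp
    fix s assume "0 \<le> s" "s \<le> t"
    then have s: "s \<in> {0..t}" by simp
    have a: "((\<lambda>s. g ((u + t *\<^sub>R w) + s *\<^sub>R v)) has_derivative (\<lambda>h. h * g' ((u + t *\<^sub>R w) + s *\<^sub>R v) v)) (at s within {0..t})"
      by (rule has_derivative_along_line) (rule dg[OF in1[OF s]])
    have b: "((\<lambda>s. g (u + s *\<^sub>R v)) has_derivative (\<lambda>h. h * g' (u + s *\<^sub>R v) v)) (at s within {0..t})"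
      by (rule has_derivative_along_line) (rule dg[OF in2[OF s]])
    show "(\<psi> has_derivative (\<lambda>h. h * (g' ((u + t *\<^sub>R w) + s *\<^sub>R v) v - g' (u + s *\<^sub>R v) v))) (at s within {0..t})"
      unfolding \<psi>_def using has_derivative_diff[OF a b] by (simp add: algebra_simps)
  qed
  then obtain \<sigma> where \<sigma>: "\<sigma> \<in> {0..t}" and e1: "\<psi> t - \<psi> 0 = t * (g' ((u + t *\<^sub>R w) + \<sigma> *\<^sub>R v) v - g' (u + \<sigma> *\<^sub>R v) v)"
    by auto
  define ch where "ch \<tau> = g' ((u + \<sigma> *\<^sub>R v) + \<tau> *\<^sub>R w) v" for \<tau>
  have in3: "(u + \<sigma> *\<^sub>R v) + \<tau> *\<^sub>R w \<in> U" if "\<tau> \<in> {0..t}" for \<tau>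
    using reg[OF \<sigma> that] by (simp add: algebra_simps)
  have "\<exists>\<tau>\<in>{0..t}. ch t - ch 0 = (\<lambda>h. h * h2 ((u + \<sigma> *\<^sub>R v) + \<tau> *\<^sub>R w) w) (t - 0)"
  proof (rule mvt_very_simple)
    show "0 \<le> t" using t by simp
    fix s assume "0 \<le> s" "s \<le> t"
    then have s: "s \<in> {0..t}" by simp
    show "(ch has_derivative (\<lambda>h. h * h2 ((u + \<sigma> *\<^sub>R v) + s *\<^sub>R w) w)) (at s within {0..t})"
      unfolding ch_def by (rule has_derivative_along_line[where g="\<lambda>y. g' y v"]) (rule dg1[OF in3[OF s]])
  qed
  then obtain \<tau> where \<tau>: "\<tau> \<in> {0..t}" and e2: "ch t - ch 0 = t * h2 ((u + \<sigma> *\<^sub>R v) + \<tau> *\<^sub>R w) w"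
    by auto
  have "g (u + t *\<^sub>R v + t *\<^sub>R w) - g (u + t *\<^sub>R v) - g (u + t *\<^sub>R w) + g u = \<psi> t - \<psi> 0"
    by (simp add: \<psi>_def algebra_simps)
  also have "\<dots> = t * (ch t - ch 0)" using e1 by (simp add: ch_def algebra_simps)
  also have "\<dots> = t * t * h2 (u + \<sigma> *\<^sub>R v + \<tau> *\<^sub>R w) w" using e2 by (simp add: algebra_simps)
  finally show ?thesis using \<sigma> \<tau> by blast
qed

lemma dist_parallelogram_less:
  fixes u v w :: "'a::real_normed_vector"
  assumes m: "0 < m" and s: "s \<in> {0..m / (2 * (norm v + norm w + 1))}"
    and \<tau>: "\<tau> \<in> {0..m / (2 * (norm v + norm w + 1))}"
  shows "dist (u + s *\<^sub>R v + \<tau> *\<^sub>R w) u < m"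
proof -
  define t where "t = m / (2 * (norm v + norm w + 1))"
  have pos: "0 < 2 * (norm v + norm w + 1)"
    by (simp add: add_nonneg_pos)
  have "dist (u + s *\<^sub>R v + \<tau> *\<^sub>R w) u \<le> s * norm v + \<tau> * norm w"
    using s \<tau> norm_triangle_ineq[of "s *\<^sub>R v" "\<tau> *\<^sub>R w"] by (simp add: dist_norm add.assoc)
  also have "\<dots> \<le> t * norm v + t * norm w"
    using s \<tau> by (intro add_mono mult_right_mono) (auto simp: t_def)
  also have "\<dots> = t * (norm v + norm w)"
    by (simp add: distrib_left)
  also have "\<dots> < t * (2 * (norm v + norm w + 1))"
    using m pos by (intro mult_strict_left_mono) (auto simp: t_def)
  also have "\<dots> = m"
    using pos by (simp add: t_def)
  finally show ?thesis .
qed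

lemma second_derivative_symmetric_real:
  fixes g :: "'a::real_normed_vector \<Rightarrow> real"
  assumes U: "open U" "u \<in> U"
    and dg: "\<And>x. x \<in> U \<Longrightarrow> (g has_derivative g' x) (at x)"
    and dv: "\<And>x. x \<in> U \<Longrightarrow> ((\<lambda>y. g' y v) has_derivative hv x) (at x)"
    and dw: "\<And>x. x \<in> U \<Longrightarrow> ((\<lambda>y. g' y w) has_derivative hw x) (at x)"
    and cv: "continuous_on U (\<lambda>x. hv x w)"
    and cw: "continuous_on U (\<lambda>x. hw x v)"
  shows "hv u w = hw u v"
proof (rule ccontr)
  define e where "e = \<bar>hv u w - hw u v\<bar> / 2"
  assume "hv u w \<noteq> hw u v"
  then have e: "e > 0" by (simp add: e_def)
  obtain r where r: "r > 0" "ball u r \<subseteq> U" using U open_contains_ball by blast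
  have "continuous (at u) (\<lambda>x. hv x w)" using cv U by (simp add: continuous_on_eq_continuous_at)
  then obtain d1 where d1: "d1 > 0" "\<And>x. dist x u < d1 \<Longrightarrow> dist (hv x w) (hv u w) < e"
    using e unfolding continuous_at_eps_delta by blast
  have "continuous (at u) (\<lambda>x. hw x v)" using cw U by (simp add: continuous_on_eq_continuous_at)
  then obtain d2 where d2: "d2 > 0" "\<And>x. dist x u < d2 \<Longrightarrow> dist (hw x v) (hw u v) < e"
    using e unfolding continuous_at_eps_delta by blast
  define m where "m = min r (min d1 d2)"
  have m: "m > 0" using r d1 d2 by (simp add: m_def)
  define t where "t = m / (2 * (norm v + norm w + 1))"
  have t: "t > 0" using m by (simp add: t_def add_nonneg_pos)
  have near_vw: "dist (u + s *\<^sub>R v + \<tau> *\<^sub>R w) u < m" if "s \<in> {0..t}" "\<tau> \<in> {0..t}" for s \<tau>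
    using dist_parallelogram_less[OF m, of s v w \<tau> u] that by (simp add: t_def)
  have near_wv: "dist (u + s *\<^sub>R w + \<tau> *\<^sub>R v) u < m" if "s \<in> {0..t}" "\<tau> \<in> {0..t}" for s \<tau>
    using dist_parallelogram_less[OF m, of s w v \<tau> u] that by (simp add: t_def add.commute[of "norm w"])
  have reg_vw: "u + s *\<^sub>R v + \<tau> *\<^sub>R w \<in> U" if "s \<in> {0..t}" "\<tau> \<in> {0..t}" for s \<tau>
    using near_vw[OF that] r by (auto simp: m_def dist_commute subset_iff)
  have reg_wv: "u + s *\<^sub>R w + \<tau> *\<^sub>R v \<in> U" if "s \<in> {0..t}" "\<tau> \<in> {0..t}" for s \<tau>
    using near_wv[OF that] r by (auto simp: m_def dist_commute subset_iff)
  obtain s1 \<tau>1 where s1: "s1 \<in> {0..t}" "\<tau>1 \<in> {0..t}" and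
    "g (u + t *\<^sub>R v + t *\<^sub>R w) - g (u + t *\<^sub>R v) - g (u + t *\<^sub>R w) + g u
      = t * t * hv (u + s1 *\<^sub>R v + \<tau>1 *\<^sub>R w) w"
    using second_difference_mean_value[OF t reg_vw dg dv] by blast
  moreover obtain s2 \<tau>2 where s2: "s2 \<in> {0..t}" "\<tau>2 \<in> {0..t}" and
    "g (u + t *\<^sub>R w + t *\<^sub>R v) - g (u + t *\<^sub>R w) - g (u + t *\<^sub>R v) + g u
      = t * t * hw (u + s2 *\<^sub>R w + \<tau>2 *\<^sub>R v) v"
    using second_difference_mean_value[OF t reg_wv dg dw] by blast
  moreover have "u + t *\<^sub>R w + t *\<^sub>R v = u + t *\<^sub>R v + t *\<^sub>R w" by (simp add: algebra_simps)
  ultimately have "t * t * hv (u + s1 *\<^sub>R v + \<tau>1 *\<^sub>R w) w = t * t * hw (u + s2 *\<^sub>R w + \<tau>2 *\<^sub>R v) v"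
    by (metis diff_diff_eq add.commute)
  then have eq: "hv (u + s1 *\<^sub>R v + \<tau>1 *\<^sub>R w) w = hw (u + s2 *\<^sub>R w + \<tau>2 *\<^sub>R v) v"
    using t by simp
  have "dist (hv (u + s1 *\<^sub>R v + \<tau>1 *\<^sub>R w) w) (hv u w) < e"
    using d1(2) near_vw[OF s1] by (simp add: m_def)
  moreover have "dist (hw (u + s2 *\<^sub>R w + \<tau>2 *\<^sub>R v) v) (hw u v) < e"
    using d2(2) near_wv[OF s2] by (simp add: m_def)
  ultimately have "\<bar>hv u w - hw u v\<bar> < 2 * e"
    using eq by (simp add: dist_real_def)
  then show False by (simp add: e_def)
qed

lemma second_derivative_symmetric:
  fixes f :: "'a::real_normed_vector \<Rightarrow> 'b::euclidean_space"
  assumes U: "open U" "u \<in> U"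
    and df: "\<And>x. x \<in> U \<Longrightarrow> f differentiable (at x)"
    and d1: "\<And>v x. x \<in> U \<Longrightarrow> (\<lambda>y. frechet_derivative f (at y) v) differentiable (at x)"
    and c2: "\<And>v w. continuous_on U (\<lambda>x. frechet_derivative (\<lambda>y. frechet_derivative f (at y) v) (at x) w)"
  shows "frechet_derivative (\<lambda>y. frechet_derivative f (at y) v) (at u) w =
         frechet_derivative (\<lambda>y. frechet_derivative f (at y) w) (at u) v"
proof (rule euclidean_eqI)
  fix b :: 'b assume "b \<in> Basis"
  note inner_b = bounded_linear.has_derivative[OF bounded_linear_inner_left]
  have dg: "((\<lambda>x. f x \<bullet> b) has_derivative (\<lambda>h. frechet_derivative f (at x) h \<bullet> b)) (at x)"
    if "x \<in> U" for x
    using inner_b[OF df[OF that, unfolded frechet_derivative_works]] .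
  have dd: "((\<lambda>y. frechet_derivative f (at y) z \<bullet> b) has_derivative
      (\<lambda>k. frechet_derivative (\<lambda>y. frechet_derivative f (at y) z) (at x) k \<bullet> b)) (at x)"
    if "x \<in> U" for x z
    using inner_b[OF d1[OF that, unfolded frechet_derivative_works]] .
  have cc: "continuous_on U (\<lambda>x. frechet_derivative (\<lambda>y. frechet_derivative f (at y) z) (at x) k \<bullet> b)"
    for z k
    using c2[of z k] by (intro continuous_intros)
  show "frechet_derivative (\<lambda>y. frechet_derivative f (at y) v) (at u) w \<bullet> b =
        frechet_derivative (\<lambda>y. frechet_derivative f (at y) w) (at u) v \<bullet> b"
    by (rule second_derivative_symmetric_real[where g="\<lambda>x. f x \<bullet> b", OF U dg dd dd cc cc])
qed

lemma smooth_on_differentiable: "smooth_on f U \<Longrightarrow> x \<in> U \<Longrightarrow> f differentiable (at x)"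
  unfolding smooth_on_def by (drule spec[of _ 1]) simp

lemma smooth_on_continuous: "smooth_on f U \<Longrightarrow> continuous_on U f"
  unfolding smooth_on_def by (drule spec[of _ 0]) simp

lemma smooth_on_frechet_derivative:
  "smooth_on f U \<Longrightarrow> smooth_on (\<lambda>x. frechet_derivative f (at x) v) U"
  unfolding smooth_on_def by (metis Ck.simps(2))

lemma has_derivative_zero_if_constant_on:
  assumes "open U" "u \<in> U" "\<And>x. x \<in> U \<Longrightarrow> \<phi> x = k" "(\<phi> has_derivative \<phi>') (at u)"
  shows "\<phi>' v = 0"
proof -
  have "(\<phi> has_derivative (\<lambda>h. 0)) (at u)"
    by (rule has_derivative_transform_within_open[of "\<lambda>x. k" _ _ _ U]) (use assms in auto)
  then have "\<phi>' = (\<lambda>h. 0)" using assms(4) has_derivative_unique by blast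
  then show ?thesis by simp
qed

lemma locally_constant_if_multiple_of_pi:
  fixes f :: "'a::metric_space \<Rightarrow> real"
  assumes U: "open U" "u \<in> U" and f: "continuous_on U f"
    and k: "\<And>x. x \<in> U \<Longrightarrow> \<exists>k::int. f x = of_int k * pi"
  shows "\<exists>V. open V \<and> u \<in> V \<and> (\<forall>x\<in>V. f x = f u)"
proof -
  have "continuous (at u) f" using f U by (simp add: continuous_on_eq_continuous_at)
  then obtain d where d: "d > 0" "\<And>x. dist x u < d \<Longrightarrow> dist (f x) (f u) < pi"
    unfolding continuous_at_eps_delta using pi_gt_zero by blast
  obtain ku where ku: "f u = of_int ku * pi" using k[OF U(2)] by blast
  have "f x = f u" if x: "x \<in> U \<inter> ball u d" for x
  proof -
    obtain kx where kx: "f x = of_int kx * pi" using k x by blast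
    have "\<bar>of_int kx * pi - of_int ku * pi\<bar> < pi"
      using d(2)[of x] x kx ku by (simp add: dist_real_def dist_commute)
    then have "\<bar>of_int (kx - ku)\<bar> * pi < 1 * pi"
      by (simp add: left_diff_distrib[symmetric] abs_mult)
    then have "\<bar>of_int (kx - ku)\<bar> < (1::real)"
      using pi_gt_zero by (simp only: mult_less_cancel_right)
    then have "kx = ku" by linarith
    then show ?thesis using kx ku by simp
  qed
  moreover have "open (U \<inter> ball u d)" "u \<in> U \<inter> ball u d"
    using U d by auto
  ultimately show ?thesis by blast
qed

lemma has_derivative_zero_if_multiple_of_pi:
  fixes f :: "'a::real_normed_vector \<Rightarrow> real"
  assumes "open U" "u \<in> U" "continuous_on U f" "\<And>x. x \<in> U \<Longrightarrow> \<exists>k::int. f x = of_int k * pi"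
    and "(f has_derivative f') (at u)"
  shows "f' v = 0"
proof -
  obtain V where V: "open V" "u \<in> V" "\<And>x. x \<in> V \<Longrightarrow> f x = f u"
    using locally_constant_if_multiple_of_pi[OF assms(1-4)] by blast
  show ?thesis
    by (rule has_derivative_zero_if_constant_on[OF V assms(5)])
qed

lemma has_derivative_linear_field_apply:
  fixes L :: "'a::euclidean_space \<Rightarrow> 'a \<Rightarrow> 'b::real_normed_vector"
  assumes U: "open U" "u \<in> U" and lin: "\<And>x. x \<in> U \<Longrightarrow> linear (L x)"
    and dL: "\<And>v. (\<lambda>x. L x v) differentiable (at u)" and de: "(e has_derivative e') (at u)"
  shows "((\<lambda>x. L x (e x)) has_derivative
           (\<lambda>w. L u (e' w) + frechet_derivative (\<lambda>x. L x (e u)) (at u) w)) (at u)"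
proof -
  define L' where "L' v = frechet_derivative (\<lambda>x. L x v) (at u)" for v
  have L': "((\<lambda>x. L x v) has_derivative L' v) (at u)" for v
    using dL[of v] by (simp add: L'_def frechet_derivative_works)
  have expand: "L x z = (\<Sum>b\<in>Basis. (z \<bullet> b) *\<^sub>R L x b)" if "x \<in> U" for x z
  proof -
    have "L x z = L x (\<Sum>b\<in>Basis. (z \<bullet> b) *\<^sub>R b)" by (simp add: euclidean_representation)
    then show ?thesis
      by (simp add: linear_sum[OF lin[OF that]] linear_scale[OF lin[OF that]])
  qed
  have sum_d: "((\<lambda>x. \<Sum>b\<in>Basis. (z x \<bullet> b) *\<^sub>R L x b) has_derivative
      (\<lambda>w. \<Sum>b\<in>Basis. (z u \<bullet> b) *\<^sub>R L' b w + (z' w \<bullet> b) *\<^sub>R L u b)) (at u)"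
    if "(z has_derivative z') (at u)" for z z'
    using that by (intro has_derivative_sum has_derivative_scaleR L'
        bounded_linear.has_derivative[OF bounded_linear_inner_left])
  have const: "L' (e u) w = (\<Sum>b\<in>Basis. (e u \<bullet> b) *\<^sub>R L' b w)" for w
  proof -
    have "((\<lambda>x. L x (e u)) has_derivative (\<lambda>w. \<Sum>b\<in>Basis. (e u \<bullet> b) *\<^sub>R L' b w)) (at u)"
      using has_derivative_transform_within_open[OF sum_d[OF has_derivative_const] U] expand
      by simp
    from has_derivative_unique[OF L'[of "e u"] this] show ?thesis
      by (rule fun_cong)
  qed
  have "((\<lambda>x. L x (e x)) has_derivative
      (\<lambda>w. \<Sum>b\<in>Basis. (e u \<bullet> b) *\<^sub>R L' b w + (e' w \<bullet> b) *\<^sub>R L u b)) (at u)"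
    using has_derivative_transform_within_open[OF sum_d[OF de] U] expand by simp
  then show ?thesis
    by (rule has_derivative_eq_rhs)
      (simp add: fun_eq_iff sum.distrib const expand[OF U(2), of "e' _"] L'_def[symmetric] add.commute)
qed

lemma gN_derivative_zero_if_constant:
  assumes U: "open U" "u \<in> U" and Y1: "(Y1 has_derivative Y1') (at u)"
    and Y2: "(Y2 has_derivative Y2') (at u)" and const: "\<And>x. x \<in> U \<Longrightarrow> gN (Y1 x) (Y2 x) = k"
  shows "gN (Y1 u) (Y2' v) + gN (Y1' v) (Y2 u) = 0"
  by (rule has_derivative_zero_if_constant_on[OF U const bounded_bilinear.FDERIV[OF bounded_bilinear_gN Y1 Y2]])

lemma P_relation_derivative:
  assumes U: "open U" "u \<in> U" and Y: "(Y has_derivative Y') (at u)" and \<theta>: "(\<theta> has_derivative \<theta>') (at u)"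
    and rel: "\<And>x. x \<in> U \<Longrightarrow> PN (Y x) = cos (2 * \<theta> x) *\<^sub>R Y x + sin (2 * \<theta> x) *\<^sub>R JN (Y x)"
  shows "PN (Y' v) = cos (2 * \<theta> u) *\<^sub>R Y' v + sin (2 * \<theta> u) *\<^sub>R JN (Y' v)
           + (- 2 * sin (2 * \<theta> u) * \<theta>' v) *\<^sub>R Y u + (2 * cos (2 * \<theta> u) * \<theta>' v) *\<^sub>R JN (Y u)"
proof -
  have \<theta>2: "((\<lambda>x. 2 * \<theta> x) has_derivative (\<lambda>w. 2 * \<theta>' w)) (at u)"
    by (rule has_derivative_mult_right[OF \<theta>])
  have cos: "((\<lambda>x. cos (2 * \<theta> x)) has_derivative (\<lambda>w. 2 * \<theta>' w * - sin (2 * \<theta> u))) (at u)"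
    using DERIV_cos[THEN DERIV_compose_FDERIV, OF \<theta>2] by simp
  have sin: "((\<lambda>x. sin (2 * \<theta> x)) has_derivative (\<lambda>w. 2 * \<theta>' w * cos (2 * \<theta> u))) (at u)"
    using DERIV_sin[THEN DERIV_compose_FDERIV, OF \<theta>2] by simp
  have "((\<lambda>x. PN (Y x) - (cos (2 * \<theta> x) *\<^sub>R Y x + sin (2 * \<theta> x) *\<^sub>R JN (Y x))) has_derivative
     (\<lambda>w. PN (Y' w) - ((cos (2 * \<theta> u) *\<^sub>R Y' w + (2 * \<theta>' w * - sin (2 * \<theta> u)) *\<^sub>R Y u) +
          (sin (2 * \<theta> u) *\<^sub>R JN (Y' w) + (2 * \<theta>' w * cos (2 * \<theta> u)) *\<^sub>R JN (Y u))))) (at u)"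
    by (intro has_derivative_diff has_derivative_add has_derivative_scaleR Y
        bounded_linear.has_derivative[OF bounded_linear_PN Y] bounded_linear.has_derivative[OF bounded_linear_JN Y]
        cos sin)
  from has_derivative_zero_if_constant_on[OF U _ this, of 0 v] rel show ?thesis
    by (simp add: algebra_simps)
qed

section \<open>Left translation in SL(2)\<close>

definition adj2 :: "m2 \<Rightarrow> m2" where
  "adj2 m = (\<chi> i j. if i = 1 \<and> j = 1 then m$2$2 else if i = 2 \<and> j = 2 then m$1$1 else - m$i$j)"

lemma adj2_nth [simp]:
  "adj2 m $ 1 $ 1 = m$2$2" "adj2 m $ 1 $ 2 = - m$1$2" "adj2 m $ 2 $ 1 = - m$2$1" "adj2 m $ 2 $ 2 = m$1$1"
  by (simp_all add: adj2_def)

lemma adj2_mult_inverse: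
  assumes "det m = 1"
  shows "m ** adj2 m = mat 1" "adj2 m ** m = mat 1"
  using assms by (simp_all add: vec_eq_iff forall_2 matrix_matrix_mult_def sum_2 det_2 mat_def algebra_simps)

lemma matrix_inv_eq_adj2:
  assumes "det m = 1"
  shows "matrix_inv m = adj2 m"
proof -
  have "m ** matrix_inv m = mat 1 \<and> matrix_inv m ** m = mat 1"
    unfolding matrix_inv_def by (rule someI[of _ "adj2 m"]) (simp add: adj2_mult_inverse[OF assms])
  then have "matrix_inv m = matrix_inv m ** (m ** adj2 m)"
    using adj2_mult_inverse[OF assms] by simp
  also have "\<dots> = adj2 m"
    using \<open>m ** matrix_inv m = mat 1 \<and> matrix_inv m ** m = mat 1\<close> by (simp add: matrix_mul_assoc)
  finally show ?thesis .
qed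

(* The inverse is written as the adjugate, which makes the map bilinear on all pairs of matrices;
   on SL2 x SL2 it is left translation by the inverse (ltriv_eq_ltriv_adj). *)
definition ltriv_adj :: "pt \<Rightarrow> pt \<Rightarrow> pt" where
  "ltriv_adj a V = (adj2 (fst a) ** fst V, adj2 (snd a) ** snd V)"

lemma bounded_bilinear_ltriv_adj: "bounded_bilinear ltriv_adj"
proof -
  have "bilinear ltriv_adj"
    unfolding bilinear_def ltriv_adj_def
    by (auto intro!: linearI simp: prod_eq_iff vec_eq_iff forall_2 matrix_matrix_mult_def sum_2 algebra_simps)
  then show ?thesis using bilinear_conv_bounded_bilinear by blast
qed

lemma ltriv_eq_ltriv_adj: "F u \<in> SL2 \<times> SL2 \<Longrightarrow> ltriv F u V = ltriv_adj (F u) V"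
  by (auto simp: ltriv_def ltriv_adj_def SL2_def matrix_inv_eq_adj2)

lemma adj2_of_traceless:
  assumes "det a = 1" "trace (adj2 a ** v) = 0"
  shows "adj2 v = - (adj2 a ** v ** adj2 a)"
  using assms by (simp add: vec_eq_iff forall_2 matrix_matrix_mult_def sum_2 det_2 trace_def) algebra

lemma adj2_commutator:
  assumes "det a = 1" "trace (adj2 a ** M) = 0" "trace (adj2 a ** N) = 0"
  shows "adj2 M ** N - adj2 N ** M + ((adj2 a ** M) ** (adj2 a ** N) - (adj2 a ** N) ** (adj2 a ** M)) = 0"
  unfolding adj2_of_traceless[OF assms(1,2)] adj2_of_traceless[OF assms(1,3)]
  by (simp add: vec_eq_iff forall_2 matrix_matrix_mult_def sum_2 algebra_simps)

lemma ltriv_adj_commutator: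
  assumes "a \<in> SL2 \<times> SL2" "ltriv_adj a M \<in> sl2 \<times> sl2" "ltriv_adj a N \<in> sl2 \<times> sl2"
  shows "ltriv_adj M N - ltriv_adj N M + brk (ltriv_adj a M) (ltriv_adj a N) = 0"
  using assms adj2_commutator[of "fst a" "fst M" "fst N"] adj2_commutator[of "snd a" "snd M" "snd N"]
  by (auto simp: ltriv_adj_def brk_def SL2_def sl2_def prod_eq_iff)

lemma tanF_eq_ltriv_adj:
  "F u \<in> SL2 \<times> SL2 \<Longrightarrow> tanF F u v = ltriv_adj (F u) (frechet_derivative F (at u) v)"
  by (simp add: tanF_def ltriv_eq_ltriv_adj)

lemma tangent_field_has_derivative:
  assumes U: "open U" "u \<in> U" and F: "smooth_on F U" and FN: "\<And>x. x \<in> U \<Longrightarrow> F x \<in> SL2 \<times> SL2"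
    and e: "(e has_derivative e') (at u)"
  shows "((\<lambda>x. tanF F x (e x)) has_derivative
    (\<lambda>w. ltriv_adj (frechet_derivative F (at u) w) (frechet_derivative F (at u) (e u)) +
         ltriv_adj (F u) (frechet_derivative F (at u) (e' w) +
                          frechet_derivative (\<lambda>x. frechet_derivative F (at x) (e u)) (at u) w))) (at u)"
proof -
  have dF: "(F has_derivative frechet_derivative F (at u)) (at u)"
    using smooth_on_differentiable[OF F U(2)] by (simp add: frechet_derivative_works)
  have "((\<lambda>x. frechet_derivative F (at x) (e x)) has_derivative
      (\<lambda>w. frechet_derivative F (at u) (e' w) + frechet_derivative (\<lambda>x. frechet_derivative F (at x) (e u)) (at u) w))
      (at u)"
    using smooth_on_differentiable[OF F] smooth_on_differentiable[OF smooth_on_frechet_derivative[OF F] U(2)]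
    by (intro has_derivative_linear_field_apply[OF U _ _ e] linear_frechet_derivative)
  from bounded_bilinear.FDERIV[OF bounded_bilinear_ltriv_adj dF this]
  have "((\<lambda>x. tanF F x (e x)) has_derivative
    (\<lambda>w. ltriv_adj (F u) (frechet_derivative F (at u) (e' w) +
           frechet_derivative (\<lambda>x. frechet_derivative F (at x) (e u)) (at u) w) +
         ltriv_adj (frechet_derivative F (at u) w) (frechet_derivative F (at u) (e u)))) (at u)"
    by (rule has_derivative_transform_within_open[OF _ U]) (simp add: FN tanF_eq_ltriv_adj)
  then show ?thesis
    by (simp add: add.commute)
qed

(* The symmetry of the second derivative of F is what makes the two derivatives differ by the
   image of the coordinate bracket only. *)
lemma tangent_field_commutator:
  assumes U: "open U" "u \<in> U" and F: "smooth_on F U" and FN: "\<And>x. x \<in> U \<Longrightarrow> F x \<in> SL2 \<times> SL2"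
    and sl2: "\<And>v. tanF F u v \<in> sl2 \<times> sl2"
    and e1: "(e1 has_derivative e1') (at u)" and e2: "(e2 has_derivative e2') (at u)"
  shows "frechet_derivative (\<lambda>x. tanF F x (e2 x)) (at u) (e1 u)
           - frechet_derivative (\<lambda>x. tanF F x (e1 x)) (at u) (e2 u)
           + brk (tanF F u (e1 u)) (tanF F u (e2 u))
         = tanF F u (e2' (e1 u) - e1' (e2 u))"
proof -
  let ?dF = "frechet_derivative F (at u)"
  define F2 where "F2 v = frechet_derivative (\<lambda>x. frechet_derivative F (at x) v) (at u)" for v
  have F2_sym: "F2 v w = F2 w v" for v w
    unfolding F2_def
    using smooth_on_differentiable[OF F] smooth_on_differentiable[OF smooth_on_frechet_derivative[OF F]]
      smooth_on_continuous[OF smooth_on_frechet_derivative[OF smooth_on_frechet_derivative[OF F]]]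
    by (intro second_derivative_symmetric[OF U]) auto
  have D: "frechet_derivative (\<lambda>x. tanF F x (e x)) (at u) (e0 u) =
      ltriv_adj (?dF (e0 u)) (?dF (e u)) + ltriv_adj (F u) (?dF (e' (e0 u)) + F2 (e u) (e0 u))"
    if "(e has_derivative e') (at u)" for e e' and e0 :: "crd \<Rightarrow> crd"
    by (simp add: frechet_derivative_at[OF tangent_field_has_derivative[OF U F FN that], symmetric] F2_def)
  have comm: "ltriv_adj (?dF (e1 u)) (?dF (e2 u)) - ltriv_adj (?dF (e2 u)) (?dF (e1 u))
      + brk (tanF F u (e1 u)) (tanF F u (e2 u)) = 0"
    using ltriv_adj_commutator[of "F u"] sl2 FN[OF U(2)] by (simp add: tanF_eq_ltriv_adj)
  have lin: "linear ?dF"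
    using smooth_on_differentiable[OF F U(2)] by (rule linear_frechet_derivative)
  note bil = bounded_bilinear.add_right[OF bounded_bilinear_ltriv_adj]
    bounded_bilinear.diff_right[OF bounded_bilinear_ltriv_adj]
  show ?thesis
    using comm by (simp add: D[OF e1] D[OF e2] F2_sym[of "e1 u"] tanF_eq_ltriv_adj FN[OF U(2)]
        linear_diff[OF lin] bil algebra_simps)
qed

section \<open>Lagrangian submanifolds with a type II frame\<close>

locale typeII_lagrangian =
  fixes F :: "crd \<Rightarrow> pt" and U :: "crd set"
    and E :: "nat \<Rightarrow> crd \<Rightarrow> crd"
    and \<theta>1 \<theta>2 :: "crd \<Rightarrow> real"
    and A B :: "crd \<Rightarrow> crd \<Rightarrow> crd"
    and c h :: "nat \<Rightarrow> nat \<Rightarrow> nat \<Rightarrow> crd \<Rightarrow> real"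
  assumes U_open: "open U"
    and F_smooth: "smooth_on F U"
    and F_in_N: "\<forall>u\<in>U. F u \<in> SL2 \<times> SL2"
    and Lagrangian: "\<forall>u\<in>U. JN ` range (tanF F u) =
                        {z \<in> sl2 \<times> sl2. \<forall>w. gN z (tanF F u w) = 0}"
    and AB: "\<forall>u\<in>U. linear (A u) \<and> linear (B u) \<and>
               (\<forall>v. PN (tanF F u v) = tanF F u (A u v) + JN (tanF F u (B u v)))"
    and E_smooth: "\<forall>i\<in>{1,2,3}. smooth_on (E i) U"
    and frame: "\<forall>u\<in>U.
        gN (tanF F u (E 1 u)) (tanF F u (E 1 u)) = 0 \<and>
        gN (tanF F u (E 2 u)) (tanF F u (E 2 u)) = 0 \<and>
        gN (tanF F u (E 1 u)) (tanF F u (E 2 u)) = 1 \<and>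
        gN (tanF F u (E 3 u)) (tanF F u (E 3 u)) = 1 \<and>
        gN (tanF F u (E 1 u)) (tanF F u (E 3 u)) = 0 \<and>
        gN (tanF F u (E 2 u)) (tanF F u (E 3 u)) = 0"
    and normalized: "\<forall>u\<in>U. JN (GN (tanF F u (E 1 u)) (tanF F u (E 2 u)))
                               = sqrt (2/3) *\<^sub>R tanF F u (E 3 u)"
    and theta_smooth: "smooth_on \<theta>1 U" "smooth_on \<theta>2 U"
    and typeII_A: "\<forall>u\<in>U.
        A u (E 1 u) = cos (2 * \<theta>1 u) *\<^sub>R E 1 u \<and>
        A u (E 2 u) = E 1 u + cos (2 * \<theta>1 u) *\<^sub>R E 2 u \<and>
        A u (E 3 u) = cos (2 * \<theta>2 u) *\<^sub>R E 3 u"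
    and typeII_B: "\<forall>u\<in>U.
        B u (E 1 u) = sin (2 * \<theta>1 u) *\<^sub>R E 1 u \<and>
        B u (E 2 u) = - cot (2 * \<theta>1 u) *\<^sub>R E 1 u + sin (2 * \<theta>1 u) *\<^sub>R E 2 u \<and>
        B u (E 3 u) = sin (2 * \<theta>2 u) *\<^sub>R E 3 u"
    and angles: "\<forall>u\<in>U. (\<exists>k::int. 2 * \<theta>1 u + \<theta>2 u = of_int k * pi) \<and>
                        (\<forall>k::int. \<theta>1 u \<noteq> of_int k * pi / 2)"
    and gauss: "\<forall>u\<in>U. \<forall>i\<in>{1,2,3}. \<forall>j\<in>{1,2,3}.
        covD F (\<lambda>x. tanF F x (E j x)) u (E i u) =
          (\<Sum>k\<in>{1,2,3}. c i j k u *\<^sub>R tanF F u (E k u)) +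
          (\<Sum>k\<in>{1,2,3}. h i j k u *\<^sub>R JN (tanF F u (E k u)))"
begin

definition tfield :: "nat \<Rightarrow> crd \<Rightarrow> pt" where
  "tfield j x = tanF F x (E j x)"

definition dfield :: "nat \<Rightarrow> nat \<Rightarrow> crd \<Rightarrow> pt" where
  "dfield i j u = frechet_derivative (tfield j) (at u) (E i u)"

lemma tanF_lagrangian: "u \<in> U \<Longrightarrow> gN (JN (tanF F u v)) (tanF F u w) = 0"
  using Lagrangian by blast

lemma tanF_lagrangian_right: "u \<in> U \<Longrightarrow> gN (tanF F u w) (JN (tanF F u v)) = 0"
  using tanF_lagrangian gN_sym by metis

lemma tanF_sl2: "u \<in> U \<Longrightarrow> tanF F u v \<in> sl2 \<times> sl2"
proof -
  assume "u \<in> U"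
  then have "JN (tanF F u v) \<in> sl2 \<times> sl2"
    using Lagrangian by blast
  from sl2_prod_scaleR[OF JN_sl2[OF this], of "-1"] show ?thesis
    by (simp add: JN_JN)
qed

lemma linear_tanF: "u \<in> U \<Longrightarrow> linear (tanF F u)"
proof -
  assume u: "u \<in> U"
  have "linear (frechet_derivative F (at u))"
    using smooth_on_differentiable[OF F_smooth u] by (rule linear_frechet_derivative)
  moreover have "linear (ltriv_adj (F u))"
    using bounded_bilinear.bounded_linear_right[OF bounded_bilinear_ltriv_adj]
    by (rule bounded_linear.linear)
  moreover have "tanF F u = ltriv_adj (F u) \<circ> frechet_derivative F (at u)"
    using F_in_N u by (simp add: fun_eq_iff tanF_eq_ltriv_adj)
  ultimately show ?thesis
    by (simp add: linear_compose)
qed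

lemma E_has_derivative:
  "i \<in> {1,2,3} \<Longrightarrow> u \<in> U \<Longrightarrow> (E i has_derivative frechet_derivative (E i) (at u)) (at u)"
  using E_smooth smooth_on_differentiable frechet_derivative_works by blast

lemma theta_has_derivative:
  "u \<in> U \<Longrightarrow> (\<theta>1 has_derivative frechet_derivative \<theta>1 (at u)) (at u)"
  "u \<in> U \<Longrightarrow> (\<theta>2 has_derivative frechet_derivative \<theta>2 (at u)) (at u)"
  using theta_smooth smooth_on_differentiable frechet_derivative_works by blast+

lemma tfield_has_derivative:
  assumes "j \<in> {1,2,3}" "u \<in> U"
  shows "(tfield j has_derivative frechet_derivative (tfield j) (at u)) (at u)"
proof -
  have "tfield j differentiable (at u)"
    using tangent_field_has_derivative[OF U_open assms(2) F_smooth _ E_has_derivative[OF assms]] F_in_N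
    unfolding differentiable_def tfield_def by blast
  then show ?thesis
    by (simp add: frechet_derivative_works)
qed

lemma P_tfield:
  assumes x: "x \<in> U"
  shows "PN (tfield 1 x) = cos (2 * \<theta>1 x) *\<^sub>R tfield 1 x + sin (2 * \<theta>1 x) *\<^sub>R JN (tfield 1 x)"
    and "PN (tfield 2 x) = tfield 1 x + cos (2 * \<theta>1 x) *\<^sub>R tfield 2 x
           + JN ((- cot (2 * \<theta>1 x)) *\<^sub>R tfield 1 x + sin (2 * \<theta>1 x) *\<^sub>R tfield 2 x)"
    and "PN (tfield 3 x) = cos (2 * \<theta>2 x) *\<^sub>R tfield 3 x + sin (2 * \<theta>2 x) *\<^sub>R JN (tfield 3 x)"
  using AB[rule_format, OF x] typeII_A[rule_format, OF x] typeII_B[rule_format, OF x]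
  by (simp_all add: tfield_def linear_scale[OF linear_tanF[OF x]] linear_add[OF linear_tanF[OF x]]
      linear_diff[OF linear_tanF[OF x]] JN_scaleR add.assoc)

lemma frame_at:
  assumes "u \<in> U"
  shows "gN (tfield 1 u) (tfield 1 u) = 0" "gN (tfield 2 u) (tfield 2 u) = 0"
    "gN (tfield 1 u) (tfield 2 u) = 1" "gN (tfield 3 u) (tfield 3 u) = 1"
    "gN (tfield 1 u) (tfield 3 u) = 0" "gN (tfield 2 u) (tfield 3 u) = 0"
  using frame assms by (simp_all add: tfield_def)

lemma lagrangian_at: "u \<in> U \<Longrightarrow> gN (JN (tfield j u)) (tfield k u) = 0"
  by (simp add: tfield_def tanF_lagrangian)

lemma normalized_at:
  "u \<in> U \<Longrightarrow> JN (GN (tfield 1 u) (tfield 2 u)) = sqrt (2/3) *\<^sub>R tfield 3 u"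
  using normalized by (simp add: tfield_def)

lemma sin_2theta1_nonzero:
  assumes u: "u \<in> U"
  shows "sin (2 * \<theta>1 u) \<noteq> 0"
proof
  assume "sin (2 * \<theta>1 u) = 0"
  then obtain n :: int where "2 * \<theta>1 u = of_int n * pi"
    unfolding sin_zero_iff_int2 by blast
  then have "\<theta>1 u = of_int n * pi / 2" by simp
  then show False using angles u by blast
qed

lemma gauss_at:
  assumes "u \<in> U" "i \<in> {1,2,3}" "j \<in> {1,2,3}"
  shows "dfield i j u + LC (tfield i u) (tfield j u) =
    (\<Sum>k\<in>{1,2,3}. c i j k u *\<^sub>R tfield k u) + (\<Sum>k\<in>{1,2,3}. h i j k u *\<^sub>R JN (tfield k u))"
  using gauss[rule_format, OF assms] by (simp add: covD_def dfield_def tfield_def[abs_def])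

lemma P_dfield:
  assumes u: "u \<in> U"
  shows "PN (dfield i 1 u) = cos (2 * \<theta>1 u) *\<^sub>R dfield i 1 u + sin (2 * \<theta>1 u) *\<^sub>R JN (dfield i 1 u)
      + (- 2 * sin (2 * \<theta>1 u) * frechet_derivative \<theta>1 (at u) (E i u)) *\<^sub>R tfield 1 u
      + (2 * cos (2 * \<theta>1 u) * frechet_derivative \<theta>1 (at u) (E i u)) *\<^sub>R JN (tfield 1 u)"
    and "PN (dfield i 3 u) = cos (2 * \<theta>2 u) *\<^sub>R dfield i 3 u + sin (2 * \<theta>2 u) *\<^sub>R JN (dfield i 3 u)
      + (- 2 * sin (2 * \<theta>2 u) * frechet_derivative \<theta>2 (at u) (E i u)) *\<^sub>R tfield 3 u
      + (2 * cos (2 * \<theta>2 u) * frechet_derivative \<theta>2 (at u) (E i u)) *\<^sub>R JN (tfield 3 u)"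
  using P_relation_derivative[OF U_open u tfield_has_derivative[OF _ u] theta_has_derivative(1)[OF u]
      P_tfield(1)]
    P_relation_derivative[OF U_open u tfield_has_derivative[OF _ u] theta_has_derivative(2)[OF u]
      P_tfield(3)]
  by (simp_all add: dfield_def)

lemma null_dfield:
  assumes u: "u \<in> U"
  shows "gN (dfield i 1 u) (tfield 1 u) = 0"
proof -
  have "gN (tfield 1 u) (dfield i 1 u) + gN (dfield i 1 u) (tfield 1 u) = 0"
    unfolding dfield_def
    by (rule gN_derivative_zero_if_constant[OF U_open u tfield_has_derivative tfield_has_derivative])
      (use u frame in \<open>auto simp: tfield_def\<close>)
  then show ?thesis
    using gN_sym[of "tfield 1 u" "dfield i 1 u"] by linarith
qed

lemma lagrangian_dfield:
  assumes u: "u \<in> U" and jk: "j \<in> {1,2,3}" "k \<in> {1,2,3}"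
  shows "gN (JN (dfield i j u)) (tfield k u) + gN (JN (tfield j u)) (dfield i k u) = 0"
proof -
  have "gN (JN (tfield j u)) (dfield i k u) + gN (JN (dfield i j u)) (tfield k u) = 0"
    unfolding dfield_def
    by (rule gN_derivative_zero_if_constant[OF U_open u
          bounded_linear.has_derivative[OF bounded_linear_JN tfield_has_derivative[OF jk(1) u]]
          tfield_has_derivative[OF jk(2) u]])
      (simp add: tfield_def tanF_lagrangian)
  then show ?thesis
    by (simp add: add.commute)
qed

lemma torsion_dfield:
  assumes u: "u \<in> U" and ij: "i \<in> {1,2,3}" "j \<in> {1,2,3}"
  shows "gN (dfield i j u - dfield j i u + brk (tfield i u) (tfield j u)) (JN (tfield k u)) = 0"
  using tangent_field_commutator[OF U_open u F_smooth _ tanF_sl2[OF u] E_has_derivative[OF ij(1) u]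
      E_has_derivative[OF ij(2) u]] F_in_N
  by (simp add: dfield_def tfield_def[abs_def] tanF_lagrangian_right[OF u])

lemma angle_sum_dfield:
  assumes u: "u \<in> U"
  shows "2 * frechet_derivative \<theta>1 (at u) v + frechet_derivative \<theta>2 (at u) v = 0"
proof -
  have "continuous_on U (\<lambda>x. 2 * \<theta>1 x + \<theta>2 x)"
    using smooth_on_continuous[OF theta_smooth(1)] smooth_on_continuous[OF theta_smooth(2)]
    by (intro continuous_intros)
  moreover have "((\<lambda>x. 2 * \<theta>1 x + \<theta>2 x) has_derivative
      (\<lambda>w. 2 * frechet_derivative \<theta>1 (at u) w + frechet_derivative \<theta>2 (at u) w)) (at u)"
    using theta_has_derivative[OF u] by (intro derivative_intros)
  ultimately show ?thesis
    using has_derivative_zero_if_multiple_of_pi[OF U_open u] angles by blast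
qed

lemma typeII_point_at:
  assumes u: "u \<in> U"
  shows "typeII_point (\<lambda>j. tfield j u) (\<lambda>i j. dfield i j u) (\<lambda>i j k. c i j k u) (\<lambda>i j k. h i j k u)
    (\<theta>1 u) (\<theta>2 u) (\<lambda>i. frechet_derivative \<theta>1 (at u) (E i u)) (\<lambda>i. frechet_derivative \<theta>2 (at u) (E i u))"
  by unfold_locales
    (fact lagrangian_at[OF u] frame_at[OF u] normalized_at[OF u] P_tfield[OF u] sin_2theta1_nonzero[OF u]
      gauss_at[OF u] P_dfield[OF u] null_dfield[OF u] lagrangian_dfield[OF u] torsion_dfield[OF u]
      angle_sum_dfield[OF u])+

end

theorem mainTheorem5:
  fixes F :: "crd \<Rightarrow> pt" and U :: "crd set"
    and E :: "nat \<Rightarrow> crd \<Rightarrow> crd"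
    and \<theta>1 \<theta>2 :: "crd \<Rightarrow> real"
    and A B :: "crd \<Rightarrow> crd \<Rightarrow> crd"
    and c h :: "nat \<Rightarrow> nat \<Rightarrow> nat \<Rightarrow> crd \<Rightarrow> real"
  assumes U_open: "open U"
    and F_smooth: "smooth_on F U"
    and F_in_N: "\<forall>u\<in>U. F u \<in> SL2 \<times> SL2"
    and immersion: "\<forall>u\<in>U. inj (frechet_derivative F (at u))"
    and nondeg: "\<forall>u\<in>U. \<forall>v. (\<forall>w. gN (tanF F u v) (tanF F u w) = 0) \<longrightarrow> v = 0"
    and Lagrangian: "\<forall>u\<in>U. JN ` range (tanF F u) =
                        {z \<in> sl2 \<times> sl2. \<forall>w. gN z (tanF F u w) = 0}"
    and AB: "\<forall>u\<in>U. linear (A u) \<and> linear (B u) \<and>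
               (\<forall>v. PN (tanF F u v) = tanF F u (A u v) + JN (tanF F u (B u v)))"
    and E_smooth: "\<forall>i\<in>{1,2,3}. smooth_on (E i) U"
    and frame: "\<forall>u\<in>U.
        gN (tanF F u (E 1 u)) (tanF F u (E 1 u)) = 0 \<and>
        gN (tanF F u (E 2 u)) (tanF F u (E 2 u)) = 0 \<and>
        gN (tanF F u (E 1 u)) (tanF F u (E 2 u)) = 1 \<and>
        gN (tanF F u (E 3 u)) (tanF F u (E 3 u)) = 1 \<and>
        gN (tanF F u (E 1 u)) (tanF F u (E 3 u)) = 0 \<and>
        gN (tanF F u (E 2 u)) (tanF F u (E 3 u)) = 0"
    and normalized: "\<forall>u\<in>U. JN (GN (tanF F u (E 1 u)) (tanF F u (E 2 u)))
                               = sqrt (2/3) *\<^sub>R tanF F u (E 3 u)"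
    and theta_smooth: "smooth_on \<theta>1 U" "smooth_on \<theta>2 U"
    and typeII_A: "\<forall>u\<in>U.
        A u (E 1 u) = cos (2 * \<theta>1 u) *\<^sub>R E 1 u \<and>
        A u (E 2 u) = E 1 u + cos (2 * \<theta>1 u) *\<^sub>R E 2 u \<and>
        A u (E 3 u) = cos (2 * \<theta>2 u) *\<^sub>R E 3 u"
    and typeII_B: "\<forall>u\<in>U.
        B u (E 1 u) = sin (2 * \<theta>1 u) *\<^sub>R E 1 u \<and>
        B u (E 2 u) = - cot (2 * \<theta>1 u) *\<^sub>R E 1 u + sin (2 * \<theta>1 u) *\<^sub>R E 2 u \<and>
        B u (E 3 u) = sin (2 * \<theta>2 u) *\<^sub>R E 3 u"
    and angles: "\<forall>u\<in>U. (\<exists>k::int. 2 * \<theta>1 u + \<theta>2 u = of_int k * pi) \<and>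
                        (\<forall>k::int. \<theta>1 u \<noteq> of_int k * pi / 2)"
    and gauss: "\<forall>u\<in>U. \<forall>i\<in>{1,2,3}. \<forall>j\<in>{1,2,3}.
        covD F (\<lambda>x. tanF F x (E j x)) u (E i u) =
          (\<Sum>k\<in>{1,2,3}. c i j k u *\<^sub>R tanF F u (E k u)) +
          (\<Sum>k\<in>{1,2,3}. h i j k u *\<^sub>R JN (tanF F u (E k u)))"
  shows "\<forall>u\<in>U.
      h 1 1 1 u = 0 \<and> h 1 1 2 u = 0 \<and> h 1 1 3 u = 0 \<and>
      frechet_derivative \<theta>1 (at u) (E 1 u) = 0 \<and>
      frechet_derivative \<theta>1 (at u) (E 2 u) = - h 2 2 2 u \<and>
      frechet_derivative \<theta>1 (at u) (E 3 u) = - h 1 2 3 u \<and>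
      frechet_derivative \<theta>2 (at u) (E 1 u) = - h 3 3 2 u \<and>
      frechet_derivative \<theta>2 (at u) (E 2 u) = - h 3 3 1 u \<and>
      frechet_derivative \<theta>2 (at u) (E 3 u) = - h 3 3 3 u \<and>
      h 3 3 1 u = - 2 * h 2 2 2 u \<and> h 3 3 2 u = 0 \<and> h 3 3 3 u = - 2 * h 1 2 3 u"
proof -
  interpret typeII_lagrangian F U E \<theta>1 \<theta>2 A B c h
    using U_open F_smooth F_in_N Lagrangian AB E_smooth frame normalized theta_smooth
      typeII_A typeII_B angles gauss
    by unfold_locales
  show ?thesis
    using typeII_point.typeII_relations[OF typeII_point_at] by blast
qed

end
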